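(* Let $\mathbb{F}_q$ be a finite field and, for $\alpha\in\mathbb{F}_q^*$, let $N_{\mathbb{A}_n}(\alpha)$ be the number of $\mathbb{F}_q$-points of $X_n(\alpha)$. If $n$ is even, then $N_{\mathbb{A}_n}(\alpha)=\frac{q^{n+2}-1}{q^2-1}$ (independently of $\alpha$). If $n$ is odd and $\alpha\neq(-1)^{(n+1)/2}$, then $N_{\mathbb{A}_n}(\alpha)=\frac{(q^{(n+1)/2}-1)(q^{(n+3)/2}-1)}{q^2-1}$. If $n$ is odd, then $N_{\mathbb{A}_n}((-1)^{(n+1)/2})=\frac{(q^{(n+1)/2}-1)(q^{(n+3)/2}-1)}{q^2-1}+q^{(n+1)/2}$.
   Context: For $\alpha$ invertible in a field $\mathbb{K}$ and $n\ge1$, $X_n(\alpha)$ is the affine variety in variables $x_1,\dots,x_n,x'_1,\dots,x'_n$ defined by $x_1x'_1=1+\alpha x_2$, $x_ix'_i=1+x_{i-1}x_{i+1}$ for $2\le i\le n-1$, $x_nx'_n=1+x_{n-1}$ (for $n=1$: $x_1x'_1=1+\alpha$). By convention $X_0(\alpha)$ is a point. For $n$ even, $X_n(\alpha)$ does not depend on $\alpha$ up to isomorphism. *)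

theory Defs
  imports Complex_Main "HOL-Library.Cardinality"
begin

definition coord :: "'a list \<Rightarrow> nat \<Rightarrow> 'a" where
  "coord xs i = xs ! (i - 1)"

definition X_eq :: "'a::field \<Rightarrow> nat \<Rightarrow> 'a list \<Rightarrow> 'a list \<Rightarrow> nat \<Rightarrow> bool" where
  "X_eq alpha n x x' i =
     (if n = 1 then coord x 1 * coord x' 1 = 1 + alpha
      else if i = 1 then coord x 1 * coord x' 1 = 1 + alpha * coord x 2
      else if i = n then coord x n * coord x' n = 1 + coord x (n - 1)
      else coord x i * coord x' i = 1 + coord x (i - 1) * coord x (i + 1))"

definition X_points :: "nat \<Rightarrow> 'a::field \<Rightarrow> ('a list \<times> 'a list) set" where
  "X_points n alpha = {(x, x'). length x = n \<and> length x' = n \<and> (\<forall>i\<in>{1..n}. X_eq alpha n x x' i)}"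

definition N_A :: "nat \<Rightarrow> 'a::{finite,field} \<Rightarrow> nat" where
  "N_A n alpha = card (X_points n alpha)"

end

theory Submission
  imports Defs
begin

text \<open>Sort the points of \<open>X\<^sub>n\<^sub>+\<^sub>2(a)\<close> by \<open>x\<^sub>1\<close>. If \<open>x\<^sub>1 \<noteq> 0\<close>, then \<open>x'\<^sub>1\<close> is determined
  and the remaining coordinates form a point of \<open>X\<^sub>n\<^sub>+\<^sub>1(x\<^sub>1)\<close>; if \<open>x\<^sub>1 = 0\<close>, then
  \<open>x\<^sub>2 = -1/a\<close>, \<open>x'\<^sub>2 = -a\<close>, \<open>x'\<^sub>1\<close> is free and the rest is a point of \<open>X\<^sub>n(-1/a)\<close>.
  Hence \<open>N\<^sub>n\<^sub>+\<^sub>2(a) = (\<Sum>y \<noteq> 0. N\<^sub>n\<^sub>+\<^sub>1(y)) + q N\<^sub>n(-1/a)\<close>, and the closed form follows by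
  induction on \<open>n\<close>: the sum over \<open>y \<noteq> 0\<close> picks up the exceptional value exactly once, and
  \<open>a \<mapsto> -1/a\<close> maps the exceptional value for \<open>n + 2\<close> to the one for \<open>n\<close>.\<close>

text \<open>The equations \<open>x\<^sub>i x'\<^sub>i = 1 + x\<^sub>i\<^sub>-\<^sub>1 x\<^sub>i\<^sub>+\<^sub>1\<close> with boundary values \<open>x\<^sub>0 = a\<close> and
  \<open>x\<^sub>n\<^sub>+\<^sub>1 = 1\<close>; peeling off \<open>x\<^sub>1\<close> turns it into the boundary value of the tail.\<close>
fun chain_eqs :: "'a::field \<Rightarrow> 'a list \<Rightarrow> 'a list \<Rightarrow> bool" where
  "chain_eqs a [] ys \<longleftrightarrow> ys = []"
| "chain_eqs a (x # xs) [] \<longleftrightarrow> False"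
| "chain_eqs a (x # xs) (x' # ys) \<longleftrightarrow> x * x' = 1 + a * hd (xs @ [1]) \<and> chain_eqs x xs ys"

lemma chain_eqs_iff_nth:
  "chain_eqs a xs ys \<longleftrightarrow> length ys = length xs \<and>
    (\<forall>i<length xs. xs ! i * ys ! i = 1 + (a # xs) ! i * (xs @ [1]) ! Suc i)"
proof (induction xs arbitrary: a ys)
  case Nil
  then show ?case by simp
next
  case (Cons x xs)
  then show ?case
    by (cases ys) (auto simp: All_less_Suc2 hd_conv_nth nth_append)
qed

definition chain_points :: "nat \<Rightarrow> 'a::field \<Rightarrow> ('a list \<times> 'a list) set" where
  "chain_points n a = {(xs, ys). length xs = n \<and> chain_eqs a xs ys}"

lemma X_points_eq_chain_points:
  assumes "n \<ge> 1"
  shows "X_points n a = chain_points n a"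
proof -
  have "X_eq a n xs ys (Suc i) \<longleftrightarrow> xs ! i * ys ! i = 1 + (a # xs) ! i * (xs @ [1]) ! Suc i"
    if "length xs = n" "i < n" for xs ys :: "'a list" and i
  proof (cases "n = Suc i")
    case True
    with that show ?thesis by (auto simp: X_eq_def coord_def nth_append nth_Cons')
  next
    case False
    with that assms show ?thesis by (auto simp: X_eq_def coord_def nth_append nth_Cons')
  qed
  then show ?thesis
    unfolding X_points_def chain_points_def image_Suc_lessThan[symmetric]
    by (auto simp: chain_eqs_iff_nth)
qed

lemma finite_chain_points: "finite (chain_points n (a::'a::{finite,field}))"
proof -
  have "finite {xs :: 'a list. length xs = n}"
    using finite_lists_length_eq[of "UNIV :: 'a set" n] by simp
  moreover have "chain_points n a \<subseteq> {xs. length xs = n} \<times> {ys. length ys = n}"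
    by (auto simp: chain_points_def chain_eqs_iff_nth)
  ultimately show ?thesis
    by (meson finite_SigmaI finite_subset)
qed

lemma chain_points_0: "chain_points 0 a = {([], [])}"
  by (auto simp: chain_points_def)

lemma card_mult_eq:
  fixes c :: "'a::{finite,field}"
  shows "card {(x, y). x * y = c} = (if c = 0 then 2 * CARD('a) - 1 else CARD('a) - 1)"
proof (cases "c = 0")
  case True
  then have "{(x, y). x * y = c} = {0} \<times> UNIV \<union> (UNIV - {0}) \<times> {0}"
    by auto
  moreover have "card ({0::'a} \<times> UNIV \<union> (UNIV - {0}) \<times> {0::'a}) = CARD('a) + (CARD('a) - 1)"
    by (subst card_Un_disjoint) (auto simp: card_cartesian_product)
  moreover have "CARD('a) \<ge> 1"
    by (simp add: Suc_leI)
  ultimately show ?thesis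
    using True by simp
next
  case False
  then have "{(x, y). x * y = c} = (\<lambda>x. (x, c / x)) ` (UNIV - {0})"
    by (auto simp: image_def field_simps)
  moreover have "inj_on (\<lambda>x. (x, c / x)) (UNIV - {0})"
    by (auto simp: inj_on_def)
  ultimately show ?thesis
    using False by (simp add: card_image card_Diff_singleton)
qed

lemma card_chain_points_1:
  fixes a :: "'a::{finite,field}"
  shows "card (chain_points 1 a) = CARD('a) - 1 + (if a = -1 then CARD('a) else 0)"
proof -
  have "chain_points 1 a = (\<lambda>(x, y). ([x], [y])) ` {(x, y). x * y = 1 + a}"
    by (auto simp: chain_points_def length_Suc_conv image_def elim: chain_eqs.elims)
  moreover have "inj (\<lambda>(x::'a, y::'a). ([x], [y]))"
    by (auto simp: inj_def)
  moreover have "1 + a = 0 \<longleftrightarrow> a = -1"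
    by (simp add: add_eq_0_iff)
  ultimately show ?thesis
    by (simp add: card_image inj_on_subset card_mult_eq mult_2)
qed

lemma chain_points_Suc_Suc:
  fixes a :: "'a::field"
  assumes "a \<noteq> 0"
  shows "chain_points (Suc (Suc m)) a =
    (\<Union>y\<in>- {0}. (\<lambda>(xs, ys). (y # xs, ((1 + a * hd xs) / y) # ys)) ` chain_points (Suc m) y) \<union>
    (\<lambda>((xs, ys), z). (0 # - 1 / a # xs, z # - a # ys)) ` (chain_points m (- 1 / a) \<times> UNIV)"
    (is "_ = ?nonzero \<union> ?zero")
proof (intro set_eqI iffI)
  fix p
  assume "p \<in> chain_points (Suc (Suc m)) a"
  then obtain x y zs x' ys where p: "p = (x # y # zs, x' # ys)" "length zs = m"
    and eqs: "x * x' = 1 + a * y" "chain_eqs x (y # zs) ys"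
    by (auto simp: chain_points_def length_Suc_conv elim: chain_eqs.elims)
  show "p \<in> ?nonzero \<union> ?zero"
  proof (cases "x = 0")
    case True
    with eqs obtain y' ys' where "ys = y' # ys'" "y * y' = 1" "chain_eqs y zs ys'"
      by (cases ys) auto
    moreover have "y = - 1 / a"
      using eqs(1) True assms by (simp add: field_simps add_eq_0_iff)
    ultimately have "p = (0 # - 1 / a # zs, x' # - a # ys')" "(zs, ys') \<in> chain_points m (- 1 / a)"
      using p True assms by (auto simp: chain_points_def field_simps)
    then show ?thesis
      by (intro UnI2 image_eqI[where x = "((zs, ys'), x')"]) auto
  next
    case False
    with p eqs have "p = (x # y # zs, ((1 + a * hd (y # zs)) / x) # ys)" "(y # zs, ys) \<in> chain_points (Suc m) x"
      by (auto simp: chain_points_def field_simps)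
    with False show ?thesis
      by (intro UnI1 UN_I[where a = x] image_eqI[where x = "(y # zs, ys)"]) auto
  qed
next
  fix p
  assume "p \<in> ?nonzero \<union> ?zero"
  then show "p \<in> chain_points (Suc (Suc m)) a"
  proof
    assume "p \<in> ?nonzero"
    then obtain y xs ys where "y \<noteq> 0" "(xs, ys) \<in> chain_points (Suc m) y"
      and "p = (y # xs, ((1 + a * hd xs) / y) # ys)"
      by auto
    then show ?thesis
      by (auto simp: chain_points_def length_Suc_conv)
  next
    assume "p \<in> ?zero"
    then obtain xs ys z where "(xs, ys) \<in> chain_points m (- 1 / a)"
      and "p = (0 # - 1 / a # xs, z # - a # ys)"
      by auto
    with assms show ?thesis
      by (auto simp: chain_points_def)
  qed
qed

lemma card_chain_points_Suc_Suc:
  fixes a :: "'a::{finite,field}"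
  assumes "a \<noteq> 0"
  shows "card (chain_points (Suc (Suc m)) a) =
    (\<Sum>y\<in>- {0}. card (chain_points (Suc m) (y :: 'a))) + CARD('a) * card (chain_points m (- 1 / a))"
proof -
  let ?f = "\<lambda>y (xs, ys). (y # xs, ((1 + a * hd xs) / y) # ys)"
  let ?g = "\<lambda>((xs, ys), z). (0 # - 1 / a # xs, z # - a # ys)"
  have "card (\<Union>y\<in>- {0}. ?f y ` chain_points (Suc m) y) = (\<Sum>y\<in>- {0}. card (?f y ` chain_points (Suc m) y))"
    by (rule card_UN_disjoint) (auto simp: finite_chain_points)
  also have "\<dots> = (\<Sum>y\<in>- {0}. card (chain_points (Suc m) (y :: 'a)))"
    by (intro sum.cong refl card_image) (auto simp: inj_on_def)
  finally have nonzero: "card (\<Union>y\<in>- {0}. ?f y ` chain_points (Suc m) y) = \<dots>" .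
  have "card (?g ` (chain_points m (- 1 / a) \<times> UNIV)) = card (chain_points m (- 1 / a) \<times> (UNIV :: 'a set))"
    by (rule card_image) (auto simp: inj_on_def)
  then have zero: "card (?g ` (chain_points m (- 1 / a) \<times> UNIV)) = CARD('a) * card (chain_points m (- 1 / a))"
    by (simp add: card_cartesian_product)
  show ?thesis
    unfolding chain_points_Suc_Suc[OF assms] nonzero[symmetric] zero[symmetric]
    by (rule card_Un_disjoint) (auto simp: finite_chain_points)
qed

definition generic_count :: "real \<Rightarrow> nat \<Rightarrow> real" where
  "generic_count q n =
    (if even n then (q ^ (n + 2) - 1) / (q\<^sup>2 - 1)
     else (q ^ ((n + 1) div 2) - 1) * (q ^ ((n + 3) div 2) - 1) / (q\<^sup>2 - 1))"

definition excess :: "real \<Rightarrow> nat \<Rightarrow> 'a::field \<Rightarrow> real" where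
  "excess q n a = (if odd n \<and> a = (- 1) ^ ((n + 1) div 2) then q ^ ((n + 1) div 2) else 0)"

lemma generic_count_even: "generic_count q (2 * k) = (q ^ (2 * k + 2) - 1) / (q\<^sup>2 - 1)"
  by (simp add: generic_count_def)

lemma generic_count_odd: "generic_count q (2 * k + 1) = (q ^ (k + 1) - 1) * (q ^ (k + 2) - 1) / (q\<^sup>2 - 1)"
proof -
  have "(2 * k + 1 + 1) div 2 = k + 1" "(2 * k + 1 + 3) div 2 = k + 2"
    by simp_all
  then show ?thesis
    by (simp add: generic_count_def)
qed

lemma add_mult_divide_eq:
  fixes d :: "'a::field"
  assumes "d \<noteq> 0"
  shows "(a * x + b * d + c * y) / d = a * (x / d) + b + c * (y / d)"
  using assms by (simp add: field_simps)

lemma generic_count_Suc_Suc: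
  assumes "q\<^sup>2 \<noteq> 1"
  shows "generic_count q (Suc (Suc n)) =
    (q - 1) * generic_count q (Suc n) + (if even n then q ^ (n div 2 + 1) else 0) + q * generic_count q n"
proof -
  have d: "q\<^sup>2 - 1 \<noteq> 0"
    using assms by simp
  obtain k where "n = 2 * k \<or> n = 2 * k + 1"
    by (metis oddE evenE)
  then show ?thesis
  proof
    assume n: "n = 2 * k"
    obtain Q where Q: "q ^ (k + 1) = Q"
      by simp
    have pow: "q ^ (2 * k + 2) = Q\<^sup>2" "q ^ (2 * (k + 1) + 2) = Q\<^sup>2 * q\<^sup>2" "q ^ (k + 2) = Q * q"
      unfolding Q[symmetric] power_mult[symmetric] power_add[symmetric] power_Suc[symmetric]
      by (simp_all add: algebra_simps)
    have "Suc n = 2 * k + 1" "Suc (Suc n) = 2 * (k + 1)"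
      using n by simp_all
    then have E: "generic_count q n = (Q\<^sup>2 - 1) / (q\<^sup>2 - 1)"
        "generic_count q (Suc n) = (Q - 1) * (Q * q - 1) / (q\<^sup>2 - 1)"
        "generic_count q (Suc (Suc n)) = (Q\<^sup>2 * q\<^sup>2 - 1) / (q\<^sup>2 - 1)"
      by (simp_all only: n generic_count_even generic_count_odd pow Q)
    have "(if even n then q ^ (n div 2 + 1) else 0) = Q"
      using n Q by simp
    moreover have "Q\<^sup>2 * q\<^sup>2 - 1 = (q - 1) * ((Q - 1) * (Q * q - 1)) + Q * (q\<^sup>2 - 1) + q * (Q\<^sup>2 - 1)"
      by algebra
    ultimately show ?thesis
      unfolding E using add_mult_divide_eq[OF d] by presburger
  next
    assume n: "n = 2 * k + 1"
    obtain Q where Q: "q ^ (k + 1) = Q"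
      by simp
    have pow: "q ^ (2 * (k + 1) + 2) = Q\<^sup>2 * q\<^sup>2" "q ^ (k + 2) = Q * q" "q ^ (k + 1 + 1) = Q * q"
        "q ^ (k + 1 + 2) = Q * q\<^sup>2"
      unfolding Q[symmetric] power_mult[symmetric] power_add[symmetric] power_Suc[symmetric]
      by (simp_all add: algebra_simps)
    have "Suc n = 2 * (k + 1)" "Suc (Suc n) = 2 * (k + 1) + 1"
      using n by simp_all
    then have E: "generic_count q n = (Q - 1) * (Q * q - 1) / (q\<^sup>2 - 1)"
        "generic_count q (Suc n) = (Q\<^sup>2 * q\<^sup>2 - 1) / (q\<^sup>2 - 1)"
        "generic_count q (Suc (Suc n)) = (Q * q - 1) * (Q * q\<^sup>2 - 1) / (q\<^sup>2 - 1)"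
      by (simp_all only: n generic_count_even generic_count_odd pow Q)
    have "(if even n then q ^ (n div 2 + 1) else 0) = 0"
      using n by simp
    moreover have "(Q * q - 1) * (Q * q\<^sup>2 - 1) = (q - 1) * (Q\<^sup>2 * q\<^sup>2 - 1) + 0 * (q\<^sup>2 - 1) + q * ((Q - 1) * (Q * q - 1))"
      by algebra
    ultimately show ?thesis
      unfolding E using add_mult_divide_eq[OF d] by presburger
  qed
qed

lemma sum_excess:
  "(\<Sum>y\<in>- {0}. excess q n (y :: 'a::{finite,field})) = (if odd n then q ^ ((n + 1) div 2) else 0)"
  by (simp add: excess_def sum.delta)

lemma excess_Suc_Suc:
  fixes a :: "'a::field"
  assumes "a \<noteq> 0"
  shows "q * excess q n (- 1 / a) = excess q (Suc (Suc n)) a"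
proof -
  let ?k = "(n + 1) div 2"
  have "- 1 / a = s \<longleftrightarrow> a = - s" if "s * s = 1" for s :: 'a
  proof
    assume "- 1 / a = s"
    then have "- 1 = a * s"
      using assms by (auto simp: field_simps)
    then have "- s = a * (s * s)"
      by (metis mult.assoc mult_minus_left mult_1)
    with that show "a = - s"
      by simp
  next
    assume "a = - s"
    moreover have "s \<noteq> 0"
      using that by auto
    ultimately show "- 1 / a = s"
      using that by (simp add: field_simps)
  qed
  moreover have "(- 1) ^ ?k * (- 1) ^ ?k = (1 :: 'a)"
    by (simp flip: power_add)
  ultimately have "- 1 / a = (- 1) ^ ?k \<longleftrightarrow> a = (- 1) ^ Suc ?k"
    by simp
  moreover have "(Suc (Suc n) + 1) div 2 = Suc ?k"
    by simp
  ultimately show ?thesis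
    by (simp add: excess_def)
qed

lemma two_le_CARD_field: "2 \<le> CARD('a::{finite,field})"
proof -
  have "card {0 :: 'a, 1} \<le> CARD('a)"
    by (rule card_mono) auto
  then show ?thesis
    by simp
qed

theorem card_chain_points:
  fixes a :: "'a::{finite,field}"
  defines "q \<equiv> real CARD('a)"
  assumes "a \<noteq> 0"
  shows "real (card (chain_points n a)) = generic_count q n + excess q n a"
proof -
  have "2 \<le> q"
    using two_le_CARD_field[where 'a = 'a] by (simp add: q_def)
  then have "2\<^sup>2 \<le> q\<^sup>2"
    by (rule power_mono) simp
  then have q2: "q\<^sup>2 \<noteq> 1"
    by simp
  have units: "real (card (- {0 :: 'a})) = q - 1"
    using two_le_CARD_field[where 'a = 'a] by (simp add: q_def Compl_eq_Diff_UNIV card_Diff_singleton of_nat_diff)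
  show ?thesis
    using assms(2)
  proof (induction n arbitrary: a rule: induct_nat_012)
    case 0
    with q2 show ?case
      by (simp add: chain_points_0 generic_count_def excess_def power2_eq_square)
  next
    case 1
    have "generic_count q 1 = q - 1"
      using q2 by (simp add: generic_count_def power2_eq_square)
    moreover have "real (card (chain_points 1 a)) = q - 1 + (if a = - 1 then q else 0)"
      using two_le_CARD_field[where 'a = 'a] unfolding card_chain_points_1 by (simp add: q_def of_nat_diff)
    ultimately show ?case
      by (simp add: excess_def)
  next
    case (ge2 n)
    have "real (card (chain_points (Suc (Suc n)) a)) =
        (\<Sum>y\<in>- {0}. real (card (chain_points (Suc n) (y :: 'a)))) + q * real (card (chain_points n (- 1 / a)))"
      using card_chain_points_Suc_Suc[OF ge2.prems] by (simp add: q_def of_nat_sum)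
    also have "\<dots> = (\<Sum>y\<in>- {0}. generic_count q (Suc n) + excess q (Suc n) (y :: 'a)) +
        q * (generic_count q n + excess q n (- 1 / a))"
      using ge2.IH ge2.prems by simp
    also have "\<dots> = (q - 1) * generic_count q (Suc n) + (if even n then q ^ (n div 2 + 1) else 0) +
        q * generic_count q n + q * excess q n (- 1 / a)"
      by (simp add: sum.distrib sum_excess units algebra_simps)
    also have "\<dots> = generic_count q (Suc (Suc n)) + excess q (Suc (Suc n)) a"
      using generic_count_Suc_Suc[OF q2] excess_Suc_Suc[OF ge2.prems] by simp
    finally show ?case .
  qed
qed

theorem mainTheorem6:
  fixes alpha :: "'a::{finite,field}" and n :: nat
  defines "q \<equiv> real CARD('a)"
  assumes "alpha \<noteq> 0" and "n \<ge> 1"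
  shows "(even n \<longrightarrow> real (N_A n alpha) = (q ^ (n + 2) - 1) / (q ^ 2 - 1))
       \<and> (odd n \<and> alpha \<noteq> (-1) ^ ((n + 1) div 2) \<longrightarrow>
            real (N_A n alpha) = (q ^ ((n + 1) div 2) - 1) * (q ^ ((n + 3) div 2) - 1) / (q ^ 2 - 1))
       \<and> (odd n \<longrightarrow>
            real (N_A n ((-1) ^ ((n + 1) div 2) :: 'a)) =
              (q ^ ((n + 1) div 2) - 1) * (q ^ ((n + 3) div 2) - 1) / (q ^ 2 - 1) + q ^ ((n + 1) div 2))"
proof -
  have count: "real (N_A n b) = generic_count q n + excess q n b" if "b \<noteq> 0" for b :: 'a
    unfolding N_A_def X_points_eq_chain_points[OF assms(3)] q_def
    using that by (rule card_chain_points)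
  have exceptional_nonzero: "((- 1) ^ ((n + 1) div 2) :: 'a) \<noteq> 0"
    by simp
  show ?thesis
    using count[OF assms(2)] count[OF exceptional_nonzero] by (auto simp: generic_count_def excess_def)
qed

end
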